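(* Let $k\ge1$ and let $q_1,q_2$ be Gaussian beams of degree $k$ with poles $x_1,x_2\in\mathbb S^2$ respectively, and let $G_1,G_2$ be the great circles perpendicular to $x_1,x_2$. Let $0\le\beta\le\pi$ be the angle between $x_1$ and $x_2$. Then $$\langle q_1,q_2\rangle=\int_{\mathbb S^2}q_1\overline{q_2}=e^{ik\alpha}\left(\cos\frac\beta2\right)^{2k},$$ where $e^{ik\alpha}$, $\alpha\in[-\pi/k,\pi/k)$, is the phase shift at the intersection points of $G_1$ and $G_2$, namely $$e^{ik\alpha}=\frac{q_1(y_1)}{q_2(y_1)}=\frac{q_1(y_2)}{q_2(y_2)},$$ $y_1,y_2$ being the two intersection points of $G_1$ and $G_2$; if the poles coincide, $e^{ik\alpha}=q_1(y)/q_2(y)$ for any point $y$ where they do not vanish.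
   Context: $\mathbb S^2\subset\mathbb R^3$ is the round unit sphere with coordinates $x=(\sin\phi\cos\theta,\sin\phi\sin\theta,\cos\phi)$. The standard Gaussian beam of degree $k$ is $Q_k(\phi,\theta)=C_kP_k^k(\cos\phi)e^{ik\theta}$, where $P_k^k$ is the associated Legendre function and $C_k>0$ normalizes $\|Q_k\|_{L^2(\mathbb S^2)}=1$; it has pole the north pole $(0,0,1)$, concentrates on the equator and propagates in the positive direction (right-hand rule). A Gaussian beam of degree $k$ with pole $x\in\mathbb S^2$ is a function of the form $q(y)=e^{ic}Q_k(Ry)$, $c\in\mathbb R$, where $R\in SO(3)$ satisfies $Rx=(0,0,1)$; its modulus is maximal on the great circle perpendicular to $x$. *)

theory Defs
  imports "HOL-Analysis.Analysis"
begin

definition sph :: "real \<Rightarrow> real \<Rightarrow> real^3" where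
  "sph phi theta = vector [sin phi * cos theta, sin phi * sin theta, cos phi]"

text \<open>Integral over the round unit sphere w.r.t. the standard area measure,
  written in spherical coordinates (area element sin phi dphi dtheta).\<close>
definition sphere_integral :: "(real^3 \<Rightarrow> complex) \<Rightarrow> complex" where
  "sphere_integral f =
     integral (cbox (0,0) (pi, 2*pi))
       (\<lambda>p. complex_of_real (sin (fst p)) * f (sph (fst p) (snd p)))"

definition sphere_inner :: "(real^3 \<Rightarrow> complex) \<Rightarrow> (real^3 \<Rightarrow> complex) \<Rightarrow> complex" where
  "sphere_inner f g = sphere_integral (\<lambda>y. f y * cnj (g y))"

definition legendreP :: "nat \<Rightarrow> real \<Rightarrow> real" where
  "legendreP l t = (deriv ^^ l) (\<lambda>s. (s^2 - 1)^l) t / (2^l * fact l)"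

definition assoc_legendreP :: "nat \<Rightarrow> nat \<Rightarrow> real \<Rightarrow> real" where
  "assoc_legendreP l m t = (-1)^m * (sqrt (1 - t^2))^m * (deriv ^^ m) (legendreP l) t"

text \<open>Unnormalized standard beam P_k^k(cos phi) e^{i k theta}, as a function of the point.\<close>
definition Qraw :: "nat \<Rightarrow> real^3 \<Rightarrow> complex" where
  "Qraw k y = complex_of_real (assoc_legendreP k k (y$3)) * cis (real k * Arg (Complex (y$1) (y$2)))"

definition Cnorm :: "nat \<Rightarrow> real" where
  "Cnorm k = 1 / sqrt (Re (sphere_inner (Qraw k) (Qraw k)))"

definition Qstd :: "nat \<Rightarrow> real^3 \<Rightarrow> complex" where
  "Qstd k y = complex_of_real (Cnorm k) * Qraw k y"

definition north_pole :: "real^3" where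
  "north_pole = vector [0, 0, 1]"

definition rotation3 :: "real^3^3 \<Rightarrow> bool" where
  "rotation3 R \<longleftrightarrow> orthogonal_matrix R \<and> det R = 1"

definition gaussian_beam :: "nat \<Rightarrow> real^3 \<Rightarrow> (real^3 \<Rightarrow> complex) \<Rightarrow> bool" where
  "gaussian_beam k x q \<longleftrightarrow>
     (\<exists>c R. rotation3 R \<and> R *v x = north_pole \<and>
            (\<forall>y\<in>sphere 0 1. q y = cis c * Qstd k (R *v y)))"

end

theory Submission
  imports Defs "HOL-Computational_Algebra.Polynomial"
begin

text \<open>On the unit sphere \<open>P\<^sub>k\<^sup>k(cos \<phi>) e\<^sup>i\<^sup>k\<^sup>\<theta>\<close> is a constant multiple of \<open>(y\<^sub>1 + i y\<^sub>2)\<^sup>k\<close>, so a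
  beam with pole \<open>x\<close> is, up to phase and normalisation, \<open>(a \<cdot> y)\<^sup>k\<close> where \<open>a\<close> combines the first two
  rows of the rotation; \<open>a\<close> is a null vector (\<open>a \<cdot> a = 0\<close>). Integrating the power \<open>(w \<cdot> y)\<^sup>2\<^sup>k\<close>
  in spherical coordinates gives \<open>4\<pi>/(2k+1) (w \<cdot> w)\<^sup>k\<close> for every complex \<open>w\<close>; taking
  \<open>w = t a + c\<close> with null \<open>a, c\<close> and comparing coefficients of \<open>t\<^sup>k\<close> yields
  \<open>\<integral> (a \<cdot> y)\<^sup>k (c \<cdot> y)\<^sup>k = \<kappa>\<^sub>k (a \<cdot> c)\<^sup>k\<close>. For a unit \<open>y\<close> orthogonal to both poles,
  \<open>a\<^sub>j = z\<^sub>j (y + i x\<^sub>j \<times> y)\<close> with \<open>|z\<^sub>j| = 1\<close>, whence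
  \<open>a\<^sub>1 \<cdot> a\<^sub>2\<^sup>* = z\<^sub>1 z\<^sub>2\<^sup>* (1 + x\<^sub>1 \<cdot> x\<^sub>2) = 2 z\<^sub>1 z\<^sub>2\<^sup>* cos\<^sup>2(\<beta>/2)\<close>, and the phase
  \<open>z\<^sub>1 z\<^sub>2\<^sup>*\<close> is exactly \<open>q\<^sub>1/q\<^sub>2\<close> at the common perpendicular points.\<close>

section \<open>Trigonometric moments\<close>

lemma has_integral_cis_int:
  fixes n :: int
  shows "((\<lambda>t. cis (of_int n * t)) has_integral (if n = 0 then of_real (2*pi) else 0)) {0..2*pi}"
proof (cases "n = 0")
  case True
  then show ?thesis using has_integral_const_real[of "1::complex" 0 "2*pi"] by (simp add: scaleR_conv_of_real)
next
  case False
  have "((\<lambda>t. cis (of_int n * t) / (\<i> * of_int n)) has_vector_derivative cis (of_int n * t)) (at t within {0..2*pi})" for t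
  proof -
    have "((\<lambda>z. exp (\<i> * of_int n * z) / (\<i> * of_int n)) has_field_derivative exp (\<i> * of_int n * of_real t)) (at (of_real t))"
      using False by (auto intro!: derivative_eq_intros)
    from has_vector_derivative_real_field[OF this] show ?thesis
      by (simp add: cis_conv_exp has_vector_derivative_at_within mult.commute mult.left_commute)
  qed
  then have "((\<lambda>t. cis (of_int n * t)) has_integral (cis (of_int n * (2*pi)) / (\<i> * of_int n) - cis (of_int n * 0) / (\<i> * of_int n))) {0..2*pi}"
    by (intro fundamental_theorem_of_calculus) auto
  moreover have "cis (of_int n * (2*pi)) = 1"
    by (simp only: cis.ctr mult.commute[of "of_int n"] cos_int_2pin sin_int_2pin) (simp add: one_complex.ctr)
  ultimately show ?thesis using False by simp
qed

definition cos_sin_moment :: "complex \<Rightarrow> complex \<Rightarrow> nat \<Rightarrow> complex" where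
  "cos_sin_moment w1 w2 j =
     (if even j then of_real (2*pi) * of_nat (j choose (j div 2)) * ((w1^2 + w2^2) / 4) ^ (j div 2) else 0)"

lemma lincomb_cos_sin_power_eq:
  fixes w1 w2 :: complex
  defines "P \<equiv> (w1 - \<i> * w2) / 2" and "Q \<equiv> (w1 + \<i> * w2) / 2"
  shows "(w1 * of_real (cos t) + w2 * of_real (sin t)) ^ j =
     (\<Sum>l\<le>j. of_nat (j choose l) * P^l * Q^(j-l) * cis (of_int (2 * int l - int j) * t))"
proof -
  have "w1 * of_real (cos t) + w2 * of_real (sin t) = P * cis t + Q * cis (-t)"
    by (simp add: P_def Q_def cis.ctr complex_eq_iff field_simps)
  then have "(w1 * of_real (cos t) + w2 * of_real (sin t)) ^ j =
      (\<Sum>l\<le>j. of_nat (j choose l) * (P * cis t)^l * (Q * cis (-t))^(j-l))"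
    by (simp add: binomial_ring)
  also have "\<dots> = (\<Sum>l\<le>j. of_nat (j choose l) * P^l * Q^(j-l) * cis (of_int (2 * int l - int j) * t))"
  proof (rule sum.cong[OF refl])
    fix l assume "l \<in> {..j}"
    have "cis t ^ l * cis (-t) ^ (j-l) = cis (real l * t) * cis (real (j - l) * (-t))"
      by (simp only: Complex.DeMoivre)
    also have "\<dots> = cis (of_int (2 * int l - int j) * t)"
      using \<open>l \<in> {..j}\<close> by (simp add: cis_mult of_nat_diff algebra_simps)
    finally show "of_nat (j choose l) * (P * cis t)^l * (Q * cis (-t))^(j-l) =
        of_nat (j choose l) * P^l * Q^(j-l) * cis (of_int (2 * int l - int j) * t)"
      by (simp add: power_mult_distrib mult_ac)
  qed
  finally show ?thesis .
qed

text \<open>Only the constant term of the trigonometric polynomial survives integration.\<close>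

lemma has_integral_cos_sin_power:
  "((\<lambda>t. (w1 * of_real (cos t) + w2 * of_real (sin t)) ^ j) has_integral cos_sin_moment w1 w2 j) {0..2*pi}"
proof -
  define P where "P = (w1 - \<i> * w2) / 2"
  define Q where "Q = (w1 + \<i> * w2) / 2"
  have "((\<lambda>t. (w1 * of_real (cos t) + w2 * of_real (sin t)) ^ j) has_integral
        (\<Sum>l\<le>j. of_nat (j choose l) * P^l * Q^(j-l) * (if 2 * int l - int j = 0 then of_real (2*pi) else 0))) {0..2*pi}"
    unfolding lincomb_cos_sin_power_eq P_def Q_def
    by (intro has_integral_sum has_integral_mult_right has_integral_cis_int) auto
  moreover have "(\<Sum>l\<le>j. of_nat (j choose l) * P^l * Q^(j-l) * (if 2 * int l - int j = 0 then of_real (2*pi) else 0))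
      = cos_sin_moment w1 w2 j"
  proof (cases "even j")
    case True
    then obtain m where m: "j = 2 * m" by blast
    have "P^m * Q^m = ((w1^2 + w2^2)/4) ^ m"
      by (simp add: P_def Q_def power_mult_distrib[symmetric] power2_eq_square algebra_simps)
    moreover have "(\<Sum>l\<le>j. of_nat (j choose l) * P^l * Q^(j-l) * (if 2 * int l - int j = 0 then of_real (2*pi) else 0))
        = (\<Sum>l\<le>j. if l = m then of_nat (j choose l) * P^l * Q^(j-l) * of_real (2*pi) else 0)"
      by (rule sum.cong) (auto simp: m)
    ultimately show ?thesis by (simp add: m cos_sin_moment_def)
  next
    case False
    then have "\<And>l. 2 * int l - int j \<noteq> 0" by presburger
    then show ?thesis using False by (simp add: cos_sin_moment_def)
  qed
  ultimately show ?thesis by simp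
qed

lemma has_integral_sin_cos_even_power:
  "((\<lambda>t. sin t * cos t ^ (2*a)) has_integral 2 / (2 * real a + 1)) {0..pi}"
proof -
  have "((\<lambda>t. -(cos t ^ Suc (2*a)) / (2 * real a + 1)) has_real_derivative sin t * cos t ^ (2*a)) (at t within {0..pi})" for t
  proof -
    have "((\<lambda>t. -(cos t ^ Suc (2*a)) / (2 * real a + 1)) has_real_derivative
        -((1 + of_nat (2*a)) * (- sin t * cos t ^ (2*a))) / (2 * real a + 1)) (at t)"
      by (intro DERIV_cdivide DERIV_minus DERIV_power_Suc DERIV_cos)
    moreover have "-((1 + of_nat (2*a)) * (- sin t * cos t ^ (2*a))) / (2 * real a + 1) = sin t * cos t ^ (2*a)"
      by (simp add: field_simps)
    ultimately show ?thesis by (simp add: has_field_derivative_at_within)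
  qed
  then have "((\<lambda>t. sin t * cos t ^ (2*a)) has_integral
      (-(cos pi ^ Suc (2*a)) / (2 * real a + 1)) - (-(cos 0 ^ Suc (2*a)) / (2 * real a + 1))) {0..pi}"
    by (intro fundamental_theorem_of_calculus) (auto simp: has_real_derivative_iff_has_vector_derivative)
  then show ?thesis by (simp add: field_simps)
qed

definition alt_choose_sum :: "nat \<Rightarrow> nat \<Rightarrow> real" where
  "alt_choose_sum i j = (\<Sum>s\<le>j. real (j choose s) * ((-1)^s / (2 * real i + 2 * real s + 1)))"

lemma has_integral_sin_odd_cos_even:
  "((\<lambda>t. sin t ^ (2*j+1) * cos t ^ (2*i)) has_integral 2 * alt_choose_sum i j) {0..pi}"
proof -
  have expand: "sin t ^ (2*j+1) * cos t ^ (2*i) = (\<Sum>s\<le>j. real (j choose s) * (-1)^s * (sin t * cos t ^ (2*(i+s))))" for t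
  proof -
    have "sin t ^ (2*j) = ((- (cos t ^ 2)) + 1) ^ j"
      by (simp only: power_mult sin_squared_eq) simp
    also have "\<dots> = (\<Sum>s\<le>j. real (j choose s) * (- (cos t ^ 2))^s * 1^(j-s))"
      by (rule binomial_ring)
    also have "\<dots> = (\<Sum>s\<le>j. real (j choose s) * (-1)^s * cos t ^ (2 * s))"
    proof -
      have "(- (c^2))^n = (-1)^n * c^(2*n)" for c :: real and n :: nat
        by (subst power_minus) (simp add: power_mult)
      then show ?thesis by (simp add: mult.assoc)
    qed
    finally have "sin t ^ (2*j+1) * cos t ^ (2*i) =
        sin t * cos t ^ (2*i) * (\<Sum>s\<le>j. real (j choose s) * (-1)^s * cos t ^ (2 * s))"
      by (simp add: mult_ac)
    also have "\<dots> = (\<Sum>s\<le>j. real (j choose s) * (-1)^s * (sin t * cos t ^ (2*(i+s))))"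
      unfolding sum_distrib_left by (rule sum.cong[OF refl]) (simp add: power_add distrib_left mult_ac)
    finally show ?thesis .
  qed
  have "((\<lambda>t. sin t ^ (2*j+1) * cos t ^ (2*i)) has_integral
      (\<Sum>s\<le>j. real (j choose s) * (-1)^s * (2 / (2 * real (i+s) + 1)))) {0..pi}"
    unfolding expand by (intro has_integral_sum has_integral_mult_right has_integral_sin_cos_even_power) auto
  then show ?thesis
    by (simp add: alt_choose_sum_def sum_distrib_left mult_ac)
qed

lemma sum_atMost_Suc_choose:
  fixes g :: "nat \<Rightarrow> 'a::comm_ring_1"
  shows "(\<Sum>s\<le>Suc j. of_nat (Suc j choose s) * g s) =
         (\<Sum>s\<le>j. of_nat (j choose s) * g s) + (\<Sum>s\<le>j. of_nat (j choose s) * g (Suc s))"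
proof -
  have "(\<Sum>s\<le>Suc j. of_nat (Suc j choose s) * g s) =
      of_nat (Suc j choose 0) * g 0 + (\<Sum>s\<le>j. of_nat (Suc j choose Suc s) * g (Suc s))"
    by (rule sum.atMost_Suc_shift)
  also have "\<dots> = g 0 + (\<Sum>s\<le>j. of_nat (j choose Suc s) * g (Suc s)) + (\<Sum>s\<le>j. of_nat (j choose s) * g (Suc s))"
    by (simp add: sum.distrib algebra_simps)
  also have "g 0 + (\<Sum>s\<le>j. of_nat (j choose Suc s) * g (Suc s)) = (\<Sum>s\<le>Suc j. of_nat (j choose s) * g s)"
    by (subst sum.atMost_Suc_shift) simp
  also have "\<dots> = (\<Sum>s\<le>j. of_nat (j choose s) * g s)"
    by (simp add: binomial_eq_0)
  finally show ?thesis .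
qed

lemma alt_choose_sum_Suc: "alt_choose_sum i (Suc j) = alt_choose_sum i j - alt_choose_sum (Suc i) j"
proof -
  have "alt_choose_sum i (Suc j) = alt_choose_sum i j +
      (\<Sum>s\<le>j. real (j choose s) * ((-1)^(Suc s) / (2 * real i + 2 * real (Suc s) + 1)))"
    unfolding alt_choose_sum_def by (rule sum_atMost_Suc_choose)
  also have "(\<Sum>s\<le>j. real (j choose s) * ((-1)^(Suc s) / (2 * real i + 2 * real (Suc s) + 1))) = - alt_choose_sum (Suc i) j"
    unfolding alt_choose_sum_def sum_negf[symmetric] by (rule sum.cong) (auto simp: field_simps)
  finally show ?thesis by simp
qed

lemma alt_choose_sum_closed_form_Suc:
  fixes i j :: nat
  defines "S \<equiv> \<lambda>i j. 4^j * fact (2*i) * fact j * fact (i+j) / (fact i * fact (2*i+2*j+1)) :: real"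
  shows "S i (Suc j) = S i j - S (Suc i) j"
proof -
  define F :: real where "F = fact (2*i+2*j+1)"
  have idx: "2*i+2*Suc j+1 = Suc (Suc (2*i+2*j+1))" "Suc (Suc (2*i))+2*j+1 = Suc (Suc (2*i+2*j+1))"
    "i + Suc j = Suc (i+j)" "Suc i + j = Suc (i+j)" "2 * Suc i = Suc (Suc (2*i))" by simp_all
  have pos: "F > 0" "2*real i+2*real j+3 > 0"
    by (simp_all add: F_def)
  have Suc_j: "S i (Suc j) = S i j * (2*real j+2) / (2*real i+2*real j+3)"
    unfolding S_def idx fact_Suc F_def[symmetric] using pos by (simp add: divide_simps) (simp add: algebra_simps)
  have Suc_i: "S (Suc i) j = S i j * (2*real i+1) / (2*real i+2*real j+3)"
    unfolding S_def idx fact_Suc F_def[symmetric] using pos by (simp add: divide_simps) (simp add: algebra_simps)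
  show ?thesis unfolding Suc_i Suc_j using pos by (simp add: divide_simps) (simp add: algebra_simps)
qed

lemma alt_choose_sum_eq:
  "alt_choose_sum i j = 4^j * fact (2*i) * fact j * fact (i+j) / (fact i * fact (2*i+2*j+1))"
proof (induction j arbitrary: i)
  case 0
  have "fact (2*i+1) = (2*real i+1) * (fact (2*i) :: real)"
    by (simp add: fact_Suc algebra_simps)
  then show ?case by (simp add: alt_choose_sum_def)
next
  case (Suc j)
  then show ?case
    using alt_choose_sum_closed_form_Suc[where i=i and j=j] by (simp only: alt_choose_sum_Suc Suc.IH)
qed

lemma alt_choose_sum_coeff:
  assumes "l \<le> n"
  shows "real (2*n choose 2*l) * real (2*l choose l) / 4^l * alt_choose_sum (n-l) l = real (n choose l) / (2 * real n + 1)"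
proof -
  have b1: "real (2*n choose 2*l) = fact (2*n) / (fact (2*l) * fact (2*n-2*l))"
    and b2: "real (n choose l) = fact n / (fact l * fact (n-l))"
    using assms by (simp_all add: binomial_fact)
  have b3: "real (2*l choose l) = fact (2*l) / (fact l * fact l)"
    using binomial_fact[of l "2*l", where 'a=real] by (simp add: mult_2)
  have s: "alt_choose_sum (n-l) l = 4^l * fact (2*n-2*l) * fact l * fact n / (fact (n-l) * fact (2*n+1))"
    unfolding alt_choose_sum_eq using assms by (simp add: algebra_simps)
  have f: "fact (2*n+1) = (2*real n+1) * (fact (2*n) :: real)"
    by (simp add: fact_Suc algebra_simps)
  define N where "N = 2*real n+1"
  have "N > 0" unfolding N_def by simp
  then show ?thesis unfolding b1 b2 b3 s f N_def[symmetric] by (simp add: field_simps)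
qed

section \<open>Integrals of powers of complex linear forms\<close>

text \<open>Complex vectors act on \<open>\<real>\<^sup>3\<close> through the bilinear (not Hermitian) pairing; a vector
  \<open>a\<close> with \<open>cbil a a = 0\<close> is a null vector.\<close>

definition clin :: "complex^3 \<Rightarrow> real^3 \<Rightarrow> complex" where
  "clin a y = a$1 * of_real (y$1) + a$2 * of_real (y$2) + a$3 * of_real (y$3)"

definition cbil :: "complex^3 \<Rightarrow> complex^3 \<Rightarrow> complex" where
  "cbil a c = a$1 * c$1 + a$2 * c$2 + a$3 * c$3"

definition cnjv :: "complex^3 \<Rightarrow> complex^3" where
  "cnjv a = (\<chi> j. cnj (a$j))"

lemma clin_sph:
  "clin a (sph p t) = a$3 * of_real (cos p) + of_real (sin p) * (a$1 * of_real (cos t) + a$2 * of_real (sin t))"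
  by (simp add: clin_def sph_def algebra_simps)

lemma cnj_clin: "cnj (clin a y) = clin (cnjv a) y"
  by (simp add: clin_def cnjv_def)

lemma cbil_cnjv: "cbil (cnjv a) (cnjv c) = cnj (cbil a c)"
  by (simp add: cbil_def cnjv_def)

lemma clin_scalar_mult: "clin (z *s a) y = z * clin a y"
  by (simp add: clin_def algebra_simps)

lemma cbil_scalar_mult: "cbil (z1 *s a) (cnjv (z2 *s c)) = z1 * cnj z2 * cbil a (cnjv c)"
  by (simp add: cbil_def cnjv_def algebra_simps)

lemma sum_atMost_even_odd:
  fixes f :: "nat \<Rightarrow> 'a::comm_monoid_add"
  shows "(\<Sum>j\<le>2*n. f j) = (\<Sum>l\<le>n. f (2*l)) + (\<Sum>l<n. f (2*l+1))"
  by (induction n) (simp_all add: ac_simps)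

lemma has_integral_azimuth_power:
  fixes u s w1 w2 :: complex
  shows "((\<lambda>t. (u + s * (w1 * of_real (cos t) + w2 * of_real (sin t))) ^ (2*n)) has_integral
     (\<Sum>l\<le>n. of_nat (2*n choose 2*l) * s^(2*l) * u^(2*(n-l)) * cos_sin_moment w1 w2 (2*l))) {0..2*pi}"
proof -
  define M where "M = cos_sin_moment w1 w2"
  have "((\<lambda>t. \<Sum>j\<le>2*n. of_nat (2*n choose j) * s^j * u^(2*n-j) * (w1 * of_real (cos t) + w2 * of_real (sin t)) ^ j)
      has_integral (\<Sum>j\<le>2*n. of_nat (2*n choose j) * s^j * u^(2*n-j) * M j)) {0..2*pi}"
    unfolding M_def by (intro has_integral_sum has_integral_mult_right has_integral_cos_sin_power) auto
  moreover have "(\<Sum>j\<le>2*n. of_nat (2*n choose j) * s^j * u^(2*n-j) * M j) =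
      (\<Sum>l\<le>n. of_nat (2*n choose 2*l) * s^(2*l) * u^(2*(n-l)) * M (2*l))"
    unfolding sum_atMost_even_odd by (simp add: M_def cos_sin_moment_def right_diff_distrib')
  moreover have "(u + s * v) ^ (2*n) = (\<Sum>j\<le>2*n. of_nat (2*n choose j) * s^j * u^(2*n-j) * v ^ j)" for v
    by (subst add.commute) (simp add: binomial_ring power_mult_distrib mult_ac)
  ultimately show ?thesis unfolding M_def by simp
qed

lemma cos_sin_moment_times_alt_choose_sum:
  assumes "l \<le> n"
  shows "of_nat (2*n choose 2*l) * cos_sin_moment w1 w2 (2*l) * of_real (2 * alt_choose_sum (n-l) l) =
    of_real (4*pi/(2*real n+1)) * of_nat (n choose l) * (w1^2 + w2^2)^l"
proof -
  have "of_nat (2*n choose 2*l) * cos_sin_moment w1 w2 (2*l) * of_real (2 * alt_choose_sum (n-l) l) =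
      of_real (4*pi * (real (2*n choose 2*l) * real (2*l choose l) / 4^l * alt_choose_sum (n-l) l)) *
      (w1^2 + w2^2)^l"
    by (simp add: cos_sin_moment_def power_divide field_simps)
  then show ?thesis
    unfolding alt_choose_sum_coeff[OF assms] by (simp add: field_simps)
qed

lemma sphere_integral_clin_power:
  "sphere_integral (\<lambda>y. clin w y ^ (2*n)) = of_real (4*pi/(2*real n+1)) * cbil w w ^ n"
proof -
  define F where "F p = of_real (sin (fst p)) * clin w (sph (fst p) (snd p)) ^ (2*n)" for p
  define c where "c l = of_nat (2*n choose 2*l) * w$3^(2*(n-l)) * cos_sin_moment (w$1) (w$2) (2*l)" for l
  have "continuous_on (cbox (0,0) (pi,2*pi)) F"
    unfolding F_def clin_sph by (intro continuous_intros)
  then have "sphere_integral (\<lambda>y. clin w y ^ (2*n)) =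
      integral (cbox 0 pi) (\<lambda>p. integral (cbox 0 (2*pi)) (\<lambda>t. F (p,t)))"
    unfolding sphere_integral_def F_def[symmetric] by (rule integral_prod_continuous)
  also have "\<dots> = integral {0..pi} (\<lambda>p. \<Sum>l\<le>n. c l * of_real (sin p ^ (2*l+1) * cos p ^ (2*(n-l))))"
  proof -
    have "integral {0..2*pi} (\<lambda>t. F (p,t)) = of_real (sin p) *
        (\<Sum>l\<le>n. of_nat (2*n choose 2*l) * of_real (sin p)^(2*l) * (w$3 * of_real (cos p))^(2*(n-l)) *
          cos_sin_moment (w$1) (w$2) (2*l))" for p
      unfolding F_def clin_sph fst_conv snd_conv
      by (intro integral_unique has_integral_mult_right has_integral_azimuth_power)
    then show ?thesis
      by (simp add: sum_distrib_left c_def power_mult_distrib mult_ac)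
  qed
  also have "\<dots> = (\<Sum>l\<le>n. c l * of_real (2 * alt_choose_sum (n-l) l))"
    by (intro integral_unique has_integral_sum has_integral_mult_right has_integral_of_real
        has_integral_sin_odd_cos_even) auto
  also have "\<dots> = of_real (4*pi/(2*real n+1)) * (\<Sum>l\<le>n. of_nat (n choose l) * (w$1^2 + w$2^2)^l * (w$3^2)^(n-l))"
    unfolding sum_distrib_left
  proof (rule sum.cong[OF refl])
    fix l assume "l \<in> {..n}"
    have "c l * of_real (2 * alt_choose_sum (n-l) l) = (w$3^2)^(n-l) *
        (of_nat (2*n choose 2*l) * cos_sin_moment (w$1) (w$2) (2*l) * of_real (2 * alt_choose_sum (n-l) l))"
      unfolding c_def power_mult by (simp add: mult_ac)
    also have "\<dots> = (w$3^2)^(n-l) * (of_real (4*pi/(2*real n+1)) * of_nat (n choose l) * (w$1^2 + w$2^2)^l)"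
      using \<open>l \<in> {..n}\<close> by (simp only: cos_sin_moment_times_alt_choose_sum atMost_iff)
    finally show "c l * of_real (2 * alt_choose_sum (n-l) l) =
        of_real (4*pi/(2*real n+1)) * (of_nat (n choose l) * (w$1^2 + w$2^2)^l * (w$3^2)^(n-l))"
      by (simp add: mult_ac)
  qed
  also have "(\<Sum>l\<le>n. of_nat (n choose l) * (w$1^2 + w$2^2)^l * (w$3^2)^(n-l)) = cbil w w ^ n"
    by (simp add: binomial_ring[symmetric] cbil_def power2_eq_square add.assoc)
  finally show ?thesis .
qed

lemma integrable_clin_powers:
  "(\<lambda>p. of_real (sin (fst p)) * (clin a (sph (fst p) (snd p)) ^ i * clin c (sph (fst p) (snd p)) ^ j))
     integrable_on cbox (0,0) (pi,2*pi)"
  unfolding clin_sph by (rule integrable_continuous) (intro continuous_intros)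

lemma sphere_integral_binomial:
  fixes t :: complex
  shows "sphere_integral (\<lambda>y. (t * clin a y + clin c y) ^ m) =
    (\<Sum>j\<le>m. (of_nat (m choose j) * t^j) * sphere_integral (\<lambda>y. clin a y ^ j * clin c y ^ (m-j)))"
proof -
  have "of_real (sin p) * (t * clin a y + clin c y) ^ m =
    (\<Sum>j\<le>m. (of_nat (m choose j) * t^j) * (of_real (sin p) * (clin a y ^ j * clin c y ^ (m-j))))" for p y
    unfolding binomial_ring sum_distrib_left by (rule sum.cong[OF refl]) (simp add: power_mult_distrib mult_ac)
  then show ?thesis
    unfolding sphere_integral_def
    by (simp only:) (subst integral_sum; auto intro!: integrable_on_mult_right integrable_clin_powers)
qed

definition null_moment :: "nat \<Rightarrow> real" where
  "null_moment k = 4*pi * 2^k * (fact k)^2 / fact (2*k+1)"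

lemma null_moment_eq: "null_moment k = 2^k * (4*pi/(2*real k+1) / real (2*k choose k))"
proof -
  have choose: "real (2*k choose k) = fact (2*k) / (fact k * fact k)"
    using binomial_fact[of k "2*k", where 'a=real] by (simp add: mult_2)
  have fact: "fact (2*k+1) = (2*real k+1) * (fact (2*k) :: real)"
    by (simp add: fact_Suc algebra_simps)
  define N where "N = 2*real k+1"
  have "N > 0" "(fact (2*k) :: real) > 0" "(fact k :: real) > 0" by (simp_all add: N_def)
  then show ?thesis
    unfolding null_moment_def choose fact N_def[symmetric] by (simp add: field_simps power2_eq_square)
qed

text \<open>Polarisation: for null \<open>a\<close>, \<open>c\<close> the vector \<open>t a + c\<close> has square \<open>2 t (a\<cdot>c)\<close>, so the
  mixed integral is the coefficient of \<open>t\<^sup>k\<close> in \<open>\<integral> (t a\<cdot>y + c\<cdot>y)\<^sup>2\<^sup>k\<close>.\<close>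

lemma sphere_integral_null_product:
  assumes "cbil a a = 0" "cbil c c = 0"
  shows "sphere_integral (\<lambda>y. clin a y ^ k * clin c y ^ k) = of_real (null_moment k) * cbil a c ^ k"
proof -
  define I where "I j = sphere_integral (\<lambda>y. clin a y ^ j * clin c y ^ (2*k-j))" for j
  define coeff where "coeff j = of_nat (2*k choose j) * I j" for j
  define coeff' where "coeff' j = (if j = k then of_real (4*pi/(2*real k+1)) * (2 * cbil a c)^k else 0)" for j
  have "(\<Sum>j\<le>2*k. coeff j * t^j) = (\<Sum>j\<le>2*k. coeff' j * t^j)" for t :: complex
  proof -
    define w where "w = (\<chi> i. t * a$i + c$i)"
    have "clin w y = t * clin a y + clin c y" for y
      unfolding w_def clin_def by (simp add: algebra_simps)
    moreover have "cbil w w = t^2 * cbil a a + t * (2 * cbil a c) + cbil c c"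
      unfolding w_def cbil_def by (simp add: algebra_simps power2_eq_square)
    ultimately have "(\<Sum>j\<le>2*k. coeff j * t^j) = of_real (4*pi/(2*real k+1)) * (2 * cbil a c)^k * t^k"
      using sphere_integral_clin_power[of w k] assms
      by (simp add: sphere_integral_binomial coeff_def I_def power_mult_distrib mult_ac)
    also have "\<dots> = (\<Sum>j\<le>2*k. if j = k then of_real (4*pi/(2*real k+1)) * (2 * cbil a c)^k * t^j else 0)"
      by simp
    also have "\<dots> = (\<Sum>j\<le>2*k. coeff' j * t^j)"
      by (rule sum.cong) (auto simp: coeff'_def)
    finally show ?thesis .
  qed
  then have "coeff k = coeff' k" using polyfun_eq_coeffs[of coeff "2*k" coeff'] by auto
  then have "of_nat (2*k choose k) * I k = of_real (4*pi/(2*real k+1)) * (2 * cbil a c)^k"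
    by (simp add: coeff_def coeff'_def)
  moreover have "(of_nat (2*k choose k) :: complex) \<noteq> 0" by simp
  ultimately have "I k = of_real (4*pi/(2*real k+1)) * (2 * cbil a c)^k / of_nat (2*k choose k)"
    by (metis nonzero_mult_div_cancel_left)
  also have "\<dots> = of_real (4*pi/(2*real k+1) / real (2*k choose k)) * (2 * cbil a c)^k"
    by (simp add: of_real_divide)
  finally show ?thesis
    by (simp add: I_def null_moment_eq power_mult_distrib mult_ac)
qed

section \<open>The standard beam as a power of a linear form\<close>

lemma deriv_poly: "deriv (poly p) = poly (pderiv (p :: real poly))"
  by (rule ext, rule DERIV_imp_deriv) (rule poly_DERIV)

lemma higher_deriv_poly: "(deriv ^^ n) (poly p) = poly ((pderiv ^^ n) (p :: real poly))"
  by (induction n) (simp_all add: deriv_poly)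

lemma higher_deriv_legendreP_self: "(deriv ^^ k) (legendreP k) t = fact (2*k) / (2^k * fact k)"
proof -
  define p :: "real poly" where "p = [:-1,0,1:] ^ k"
  have "legendreP k = poly (smult (1 / (2^k * fact k)) ((pderiv ^^ k) p))"
  proof -
    have "(\<lambda>s. (s^2 - 1)^k) = poly p"
      unfolding p_def by (rule ext) (simp add: power2_eq_square algebra_simps)
    then show ?thesis
      unfolding legendreP_def[abs_def] by (simp add: higher_deriv_poly fun_eq_iff)
  qed
  then have "(deriv ^^ k) (legendreP k) = poly (smult (1 / (2^k * fact k)) ((pderiv ^^ (2*k)) p))"
    by (simp only: higher_deriv_poly higher_pderiv_smult) (simp add: mult_2 funpow_add)
  moreover have "(pderiv ^^ (2*k)) p = [:fact (2*k):]"
  proof -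
    have deg: "degree p = 2*k"
      unfolding p_def by (subst degree_power_eq) auto
    then have "coeff p (2*k) = 1"
      using lead_coeff_power[of "[:-1,0,1:] :: real poly" k] unfolding p_def by simp
    then have "coeff ((pderiv ^^ (2*k)) p) 0 = fact (2*k)"
      unfolding coeff_higher_pderiv by (simp add: pochhammer_fact)
    moreover have "degree ((pderiv ^^ (2*k)) p) = 0"
      unfolding degree_higher_pderiv deg by simp
    ultimately show ?thesis by (metis degree_0_id)
  qed
  ultimately show ?thesis by simp
qed

definition assoc_legendre_diag_coeff :: "nat \<Rightarrow> real" where
  "assoc_legendre_diag_coeff k = (-1)^k * fact (2*k) / (2^k * fact k)"

lemma norm_vec3_squared: "norm (z :: real^3) ^ 2 = z$1^2 + z$2^2 + z$3^2"
  by (simp only: power2_norm_eq_inner) (simp add: inner_vec_def sum_3 power2_eq_square)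

lemma Qraw_on_sphere:
  assumes "norm z = 1"
  shows "Qraw k z = of_real (assoc_legendre_diag_coeff k) * Complex (z$1) (z$2) ^ k"
proof -
  have "sqrt (1 - (z$3)^2) = cmod (Complex (z$1) (z$2))"
    using norm_vec3_squared[of z] assms by (simp add: cmod_def)
  then have "assoc_legendreP k k (z$3) = assoc_legendre_diag_coeff k * cmod (Complex (z$1) (z$2)) ^ k"
    unfolding assoc_legendreP_def assoc_legendre_diag_coeff_def higher_deriv_legendreP_self by simp
  moreover have "complex_of_real (cmod w ^ k) * cis (real k * Arg w) = w ^ k" for w
    by (metis DeMoivre2 rcis_cmod_Arg rcis_def)
  ultimately show ?thesis
    unfolding Qraw_def by (metis (no_types, lifting) mult.assoc of_real_mult)
qed

lemma norm_sph: "norm (sph p t) = 1"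
proof -
  have "norm (sph p t) ^ 2 = 1"
    unfolding norm_vec3_squared by (simp add: sph_def power_mult_distrib sin_squared_eq algebra_simps)
  then show ?thesis using power2_eq_imp_eq[of "norm (sph p t)" 1] by simp
qed

lemma sphere_integral_cong:
  assumes "\<And>y. norm y = 1 \<Longrightarrow> f y = g y"
  shows "sphere_integral f = sphere_integral g"
  unfolding sphere_integral_def using assms norm_sph by simp

lemma sphere_integral_cmult: "sphere_integral (\<lambda>y. c * f y) = c * sphere_integral f"
  unfolding sphere_integral_def by (simp add: mult.left_commute)

lemma Cnorm_squared: "Cnorm k ^ 2 * (assoc_legendre_diag_coeff k ^ 2 * null_moment k * 2^k) = 1"
proof -
  define e :: "complex^3" where "e = vector [1, \<i>, 0]"
  have clin_e: "clin e y = Complex (y$1) (y$2)" for y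
    by (simp add: e_def clin_def complex_eq_iff)
  have "sphere_inner (Qraw k) (Qraw k) =
      sphere_integral (\<lambda>y. of_real (assoc_legendre_diag_coeff k ^ 2) * (clin e y ^ k * clin (cnjv e) y ^ k))"
    unfolding sphere_inner_def
    by (rule sphere_integral_cong)
      (simp add: Qraw_on_sphere clin_e[symmetric] cnj_clin[symmetric] power2_eq_square mult_ac)
  also have "\<dots> = of_real (assoc_legendre_diag_coeff k ^ 2 * null_moment k * 2^k)"
    unfolding sphere_integral_cmult
    by (subst sphere_integral_null_product) (simp_all add: e_def cbil_def cnjv_def)
  finally have "Re (sphere_inner (Qraw k) (Qraw k)) = assoc_legendre_diag_coeff k ^ 2 * null_moment k * 2^k"
    by simp
  moreover have "assoc_legendre_diag_coeff k \<noteq> 0" "null_moment k > 0"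
    by (simp_all add: assoc_legendre_diag_coeff_def null_moment_def)
  ultimately show ?thesis unfolding Cnorm_def by (simp add: power_divide)
qed

definition beam_amplitude :: "nat \<Rightarrow> real" where
  "beam_amplitude k = Cnorm k * assoc_legendre_diag_coeff k"

lemma beam_amplitude_squared: "beam_amplitude k ^ 2 * (null_moment k * 2^k) = 1"
  using Cnorm_squared[of k] by (simp add: beam_amplitude_def power_mult_distrib mult_ac)

section \<open>Beams with a given pole\<close>

text \<open>The first two rows of a rotation \<open>R\<close>, combined into one complex vector: the standard
  beam composed with \<open>R\<close> is a power of \<open>clin (rowc R)\<close>.\<close>

definition rowc :: "real^3^3 \<Rightarrow> complex^3" where
  "rowc R = (\<chi> j. Complex (R$1$j) (R$2$j))"

definition frame :: "real^3 \<Rightarrow> real^3 \<Rightarrow> complex^3" where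
  "frame x y = (\<chi> j. Complex (y$j) ((cross3 x y)$j))"

lemma clin_rowc: "clin (rowc R) y = Complex ((R *v y)$1) ((R *v y)$2)"
  by (simp add: clin_def rowc_def matrix_vector_mult_def sum_3 complex_eq_iff)

lemma cbil_rowc_self:
  assumes "orthogonal_matrix R"
  shows "cbil (rowc R) (rowc R) = 0"
proof -
  have M: "R ** transpose R = mat 1" using assms unfolding orthogonal_matrix_def by simp
  have rows: "R$i$1 * R$j$1 + R$i$2 * R$j$2 + R$i$3 * R$j$3 = (if i = j then 1 else 0)" for i j
    using arg_cong[OF M, of "\<lambda>M. M$i$j"] by (simp add: matrix_matrix_mult_def transpose_def mat_def sum_3)
  show ?thesis
    using rows[of 1 1] rows[of 2 2] rows[of 1 2]
    unfolding cbil_def rowc_def complex_eq_iff by (simp add: algebra_simps)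
qed

lemma beam_eq_clin_power:
  assumes "gaussian_beam k x q"
  obtains c R where "rotation_matrix R" "R *v x = north_pole"
    "\<And>y. y \<in> sphere 0 1 \<Longrightarrow> q y = cis c * of_real (beam_amplitude k) * clin (rowc R) y ^ k"
proof -
  obtain c R where R: "rotation3 R" "R *v x = north_pole" and q: "\<forall>y\<in>sphere 0 1. q y = cis c * Qstd k (R *v y)"
    using assms unfolding gaussian_beam_def by blast
  have RM: "rotation_matrix R" using R unfolding rotation3_def rotation_matrix_def by simp
  then have "norm (R *v y) = norm y" for y
    by (simp add: rotation_matrix_def orthogonal_transformation_matrix orthogonal_transformation_norm)
  then have "q y = cis c * of_real (beam_amplitude k) * clin (rowc R) y ^ k"
    if "y \<in> sphere 0 1" for y
    using q that unfolding Qstd_def by (simp add: Qraw_on_sphere clin_rowc beam_amplitude_def mult_ac)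
  then show ?thesis using that RM R(2) by blast
qed

text \<open>For a unit vector \<open>y\<close> orthogonal to the pole \<open>x\<close> the rows of \<open>R\<close> are a rotation of
  the frame \<open>(y, x \<times> y)\<close> by the angle of \<open>R y\<close> in the equatorial plane.\<close>

lemma rowc_eq_frame:
  assumes R: "rotation_matrix R" and Rx: "R *v x = north_pole" and y: "norm y = 1" "x \<bullet> y = 0"
  shows "rowc R = clin (rowc R) y *s frame x y" and "cmod (clin (rowc R) y) = 1"
proof -
  have OM: "orthogonal_matrix R" using R unfolding rotation_matrix_def by simp
  have OT: "orthogonal_transformation (\<lambda>v. R *v v)"
    using OM by (simp add: orthogonal_transformation_matrix)
  define p where "p = (R *v y)$1"
  define s where "s = (R *v y)$2"
  have "(R *v y) \<bullet> (R *v x) = y \<bullet> x" using OT unfolding orthogonal_transformation_def by blast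
  then have y3: "(R *v y)$3 = 0" using Rx y by (simp add: north_pole_def inner_vec_def sum_3 mult.commute)
  have "norm (R *v y) = 1" using OT y orthogonal_transformation_norm by metis
  then have ps: "p^2 + s^2 = 1" using norm_vec3_squared[of "R *v y"] y3 unfolding p_def s_def by simp
  then show "cmod (clin (rowc R) y) = 1" unfolding clin_rowc p_def s_def cmod_def by simp
  have "R *v cross3 x y = cross3 north_pole (R *v y)"
    using cross_rotation_matrix[OF R, of x y] Rx by simp
  then have Rw: "(R *v cross3 x y)$1 = - s" "(R *v cross3 x y)$2 = p" "(R *v cross3 x y)$3 = 0"
    by (simp_all add: cross3_def north_pole_def p_def s_def)
  have RTR: "transpose R ** R = mat 1" using OM orthogonal_matrix by blast
  have row_eq: "v$j = R$i$j" if "R *v v = axis i 1" for v i j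
  proof -
    have "v = transpose R *v (R *v v)" by (simp add: matrix_vector_mul_assoc RTR)
    then show ?thesis
      unfolding that using exhaust_3[of i] by (auto simp: matrix_vector_mult_def transpose_def axis_def sum_3)
  qed
  have "(p *\<^sub>R y - s *\<^sub>R cross3 x y)$j = R$1$j" for j
    using ps y3 by (intro row_eq) (simp add: vec_eq_iff forall_3 axis_def matrix_vector_mult_diff_distrib
        matrix_vector_mult_scaleR Rw p_def[symmetric] s_def[symmetric] power2_eq_square)
  moreover have "(s *\<^sub>R y + p *\<^sub>R cross3 x y)$j = R$2$j" for j
    using ps y3 by (intro row_eq) (simp add: vec_eq_iff forall_3 axis_def matrix_vector_right_distrib
        matrix_vector_mult_scaleR Rw p_def[symmetric] s_def[symmetric] power2_eq_square)
  ultimately show "rowc R = clin (rowc R) y *s frame x y"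
    unfolding clin_rowc p_def[symmetric] s_def[symmetric] unfolding rowc_def frame_def vec_eq_iff
    by (auto simp: vector_scalar_mult_def complex_eq_iff algebra_simps)
qed

lemma cbil_frame_cnjv_frame:
  assumes "norm y = 1" "x1 \<bullet> y = 0" "x2 \<bullet> y = 0"
  shows "cbil (frame x1 y) (cnjv (frame x2 y)) = 1 + x1 \<bullet> x2"
proof -
  have "cbil (frame x1 y) (cnjv (frame x2 y)) =
      Complex (y \<bullet> y + cross3 x1 y \<bullet> cross3 x2 y) (cross3 x1 y \<bullet> y - cross3 x2 y \<bullet> y)"
    by (simp add: cbil_def frame_def cnjv_def inner_vec_def sum_3 complex_eq_iff algebra_simps)
  moreover have "cross3 x1 y \<bullet> cross3 x2 y = (x1 \<bullet> x2) * (y \<bullet> y) - (x1 \<bullet> y) * (y \<bullet> x2)"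
    by (simp add: cross3_def inner_vec_def sum_3 algebra_simps)
  moreover have "y \<bullet> y = 1" using assms(1) by (simp add: norm_eq_1)
  ultimately show ?thesis using assms(2) by (simp add: dot_cross_self complex_eq_iff)
qed

lemma exists_unit_orthogonal_to_two:
  fixes x1 x2 :: "real^3"
  obtains y where "norm y = 1" "x1 \<bullet> y = 0" "x2 \<bullet> y = 0"
proof -
  have "dim {x1, x2} \<le> card {x1, x2}" by (rule dim_le_card) (auto intro: span_base)
  also have "\<dots> \<le> 2" by (simp add: card_insert_le_m1)
  finally have "dim {x1, x2} < DIM(real^3)" by simp
  then obtain z where z: "z \<noteq> 0" "\<And>y. y \<in> span {x1, x2} \<Longrightarrow> orthogonal z y"
    by (rule orthogonal_to_subspace_exists) blast
  then have "x1 \<bullet> z = 0" "x2 \<bullet> z = 0"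
    unfolding orthogonal_def by (simp_all add: inner_commute span_base)
  then show ?thesis using that[of "z /\<^sub>R norm z"] z(1) by (simp add: inner_commute)
qed

lemma unit_inner_eq_minus_one:
  fixes x1 x2 :: "real^3"
  assumes "norm x1 = 1" "norm x2 = 1" "1 + x1 \<bullet> x2 = 0"
  shows "x1 = - x2"
proof -
  have "norm (x1 + x2) ^ 2 = 0"
    using assms unfolding power2_norm_eq_inner by (simp add: inner_add inner_commute norm_eq_1)
  then show ?thesis by (simp add: add_eq_0_iff2)
qed

text \<open>At a common equatorial point \<open>y\<close> of two beams, \<open>q\<^sub>1 y / q\<^sub>2 y\<close> is \<open>cis (c\<^sub>1 - c\<^sub>2)\<close>
  times the \<open>k\<close>-th power of this unit complex number.\<close>

definition rowc_phase :: "real^3^3 \<Rightarrow> real^3^3 \<Rightarrow> real^3 \<Rightarrow> complex" where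
  "rowc_phase R1 R2 y = clin (rowc R1) y * cnj (clin (rowc R2) y)"

lemma rowc_phase_at_common_perpendicular:
  assumes R1: "rotation_matrix R1" "R1 *v x1 = north_pole" and R2: "rotation_matrix R2" "R2 *v x2 = north_pole"
    and y: "norm y = 1" "x1 \<bullet> y = 0" "x2 \<bullet> y = 0"
  shows "cbil (rowc R1) (cnjv (rowc R2)) = rowc_phase R1 R2 y * of_real (1 + x1 \<bullet> x2)"
    and "cmod (rowc_phase R1 R2 y) = 1"
    and "clin (rowc R1) y = rowc_phase R1 R2 y * clin (rowc R2) y"
proof -
  note frame1 = rowc_eq_frame[OF R1 y(1,2)] and frame2 = rowc_eq_frame[OF R2 y(1,3)]
  show "cbil (rowc R1) (cnjv (rowc R2)) = rowc_phase R1 R2 y * of_real (1 + x1 \<bullet> x2)"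
    by (subst frame1(1), subst frame2(1)) (simp add: cbil_scalar_mult cbil_frame_cnjv_frame[OF y] rowc_phase_def)
  show "cmod (rowc_phase R1 R2 y) = 1"
    using frame1(2) frame2(2) by (simp add: rowc_phase_def norm_mult)
  have "cnj w * w = 1" if "cmod w = 1" for w
    using complex_norm_square[of w] that by (simp add: mult.commute)
  then show "clin (rowc R1) y = rowc_phase R1 R2 y * clin (rowc R2) y"
    using frame2(2) by (simp add: rowc_phase_def mult.assoc)
qed

lemma rowc_same_pole:
  assumes "rotation_matrix R1" "R1 *v x = north_pole" "rotation_matrix R2" "R2 *v x = north_pole"
    and "norm y = 1" "x \<bullet> y = 0"
  shows "rowc R1 = rowc_phase R1 R2 y *s rowc R2"
  using rowc_eq_frame(1)[OF assms(1,2,5,6)] rowc_eq_frame(1)[OF assms(3,4,5,6)]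
    rowc_phase_at_common_perpendicular(3)[OF assms(1-4) assms(5,6,6)]
  by (metis vector_smult_assoc)

lemma rowc_phase_eq_at_common_perpendiculars:
  assumes R1: "rotation_matrix R1" "R1 *v x1 = north_pole" and R2: "rotation_matrix R2" "R2 *v x2 = north_pole"
    and "norm x1 = 1" "norm x2 = 1" "x1 \<noteq> - x2"
    and y: "norm y = 1" "x1 \<bullet> y = 0" "x2 \<bullet> y = 0" and y': "norm y' = 1" "x1 \<bullet> y' = 0" "x2 \<bullet> y' = 0"
  shows "rowc_phase R1 R2 y = rowc_phase R1 R2 y'"
proof -
  have "1 + x1 \<bullet> x2 \<noteq> 0" using unit_inner_eq_minus_one assms(5-7) by blast
  then have "1 + complex_of_real (x1 \<bullet> x2) \<noteq> 0" by (metis of_real_1 of_real_add of_real_eq_0_iff)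
  then show ?thesis
    using rowc_phase_at_common_perpendicular(1)[OF R1 R2 y] rowc_phase_at_common_perpendicular(1)[OF R1 R2 y']
    by simp
qed

lemma sphere_inner_null_powers:
  assumes "cbil a1 a1 = 0" "cbil a2 a2 = 0" and A: "A^2 * (null_moment k * 2^k) = 1"
    and q1: "\<And>y. y \<in> sphere 0 1 \<Longrightarrow> q1 y = cis c1 * of_real A * clin a1 y ^ k"
    and q2: "\<And>y. y \<in> sphere 0 1 \<Longrightarrow> q2 y = cis c2 * of_real A * clin a2 y ^ k"
  shows "sphere_inner q1 q2 = cis (c1 - c2) * (cbil a1 (cnjv a2) / 2) ^ k"
proof -
  have "sphere_inner q1 q2 =
      sphere_integral (\<lambda>y. (cis (c1 - c2) * of_real (A^2)) * (clin a1 y ^ k * clin (cnjv a2) y ^ k))"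
    unfolding sphere_inner_def
    by (rule sphere_integral_cong) (simp add: q1 q2 cnj_clin[symmetric] cis_cnj cis_mult power2_eq_square mult_ac)
  also have "\<dots> = cis (c1 - c2) * of_real (A^2 * (null_moment k * 2^k)) * (cbil a1 (cnjv a2) / 2) ^ k"
    using assms(1,2) unfolding sphere_integral_cmult
    by (subst sphere_integral_null_product) (simp_all add: cbil_cnjv power_divide mult_ac)
  finally show ?thesis unfolding A by simp
qed

lemma beam_quotient:
  fixes u1 u2 l1 l2 Z :: complex
  assumes "u1 = cis c1 * of_real A * l1 ^ k" "u2 = cis c2 * of_real A * l2 ^ k"
    and "l1 = Z * l2" "l2 \<noteq> 0" "A \<noteq> 0"
  shows "u2 \<noteq> 0" and "u1 / u2 = cis (c1 - c2) * Z ^ k"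
  using assms by (simp_all add: power_mult_distrib cis_divide[symmetric] field_simps)

lemma exists_cis_root:
  assumes "cmod P = 1" "k > 0"
  obtains \<alpha> where "-pi / real k \<le> \<alpha>" "\<alpha> < pi / real k" "cis (real k * \<alpha>) = P"
proof -
  define \<theta> where "\<theta> = (if Arg P = pi then -pi else Arg P)"
  have "-pi \<le> \<theta>" "\<theta> < pi" unfolding \<theta>_def using Arg_bounded[of P] by auto
  moreover have "cis \<theta> = P"
    using rcis_cmod_Arg[of P] assms(1) by (auto simp: \<theta>_def rcis_def cis.ctr complex_eq_iff)
  ultimately show ?thesis
    using that[of "\<theta> / real k"] assms(2) divide_right_mono[of "-pi" \<theta> "real k"]
      divide_strict_right_mono[of \<theta> pi "real k"] by simp
qed

lemma cos_half_arccos_power: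
  assumes "\<bar>C\<bar> \<le> 1"
  shows "cos (arccos C / 2) ^ (2*k) = ((1 + C) / 2) ^ k"
proof -
  have "cos (arccos C / 2) ^ 2 = (1 + C) / 2"
    using cos_double_cos[of "arccos C / 2"] cos_arccos[of C] assms by simp
  then show ?thesis by (simp only: power_mult)
qed


lemma sphere_inner_beams:
  assumes R1: "rotation_matrix R1" "R1 *v x1 = north_pole" and R2: "rotation_matrix R2" "R2 *v x2 = north_pole"
    and "norm x1 = 1" "norm x2 = 1" and y: "norm y = 1" "x1 \<bullet> y = 0" "x2 \<bullet> y = 0"
    and q1: "\<And>y. y \<in> sphere 0 1 \<Longrightarrow> q1 y = cis c1 * of_real (beam_amplitude k) * clin (rowc R1) y ^ k"
    and q2: "\<And>y. y \<in> sphere 0 1 \<Longrightarrow> q2 y = cis c2 * of_real (beam_amplitude k) * clin (rowc R2) y ^ k"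
  shows "sphere_inner q1 q2 =
    cis (c1 - c2) * rowc_phase R1 R2 y ^ k * of_real (cos (arccos (x1 \<bullet> x2) / 2) ^ (2 * k))"
proof -
  have "cbil (rowc R1) (rowc R1) = 0" "cbil (rowc R2) (rowc R2) = 0"
    using R1(1) R2(1) cbil_rowc_self by (auto simp: rotation_matrix_def)
  then have "sphere_inner q1 q2 = cis (c1 - c2) * (rowc_phase R1 R2 y * of_real ((1 + x1 \<bullet> x2) / 2)) ^ k"
    using sphere_inner_null_powers[OF _ _ beam_amplitude_squared q1 q2]
      rowc_phase_at_common_perpendicular(1)[OF R1 R2 y] by (simp add: mult.assoc)
  moreover have "\<bar>x1 \<bullet> x2\<bar> \<le> 1" using Cauchy_Schwarz_ineq2[of x1 x2] assms(5,6) by simp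
  ultimately show ?thesis by (simp add: cos_half_arccos_power power_mult_distrib power_divide)
qed

theorem lemma2p3:
  fixes k :: nat and x1 x2 :: "real^3" and q1 q2 :: "real^3 \<Rightarrow> complex" and \<beta> :: real
  assumes "k \<ge> 1"
    and "x1 \<in> sphere 0 1" and "x2 \<in> sphere 0 1"
    and "gaussian_beam k x1 q1" and "gaussian_beam k x2 q2"
    and "\<beta> = arccos (x1 \<bullet> x2)"
  shows "\<exists>\<alpha>. -pi / real k \<le> \<alpha> \<and> \<alpha> < pi / real k \<and>
           sphere_inner q1 q2 = cis (real k * \<alpha>) * complex_of_real ((cos (\<beta> / 2)) ^ (2 * k)) \<and>
           (x1 \<noteq> x2 \<and> x1 \<noteq> - x2 \<longrightarrow>
              (\<forall>y\<in>sphere 0 1. y \<bullet> x1 = 0 \<and> y \<bullet> x2 = 0 \<longrightarrow>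
                  q2 y \<noteq> 0 \<and> cis (real k * \<alpha>) = q1 y / q2 y)) \<and>
           (x1 = x2 \<longrightarrow>
              (\<forall>y\<in>sphere 0 1. q2 y \<noteq> 0 \<longrightarrow> cis (real k * \<alpha>) = q1 y / q2 y))"
proof -
  obtain c1 R1 where R1: "rotation_matrix R1" "R1 *v x1 = north_pole"
    and q1: "\<And>y. y \<in> sphere 0 1 \<Longrightarrow> q1 y = cis c1 * of_real (beam_amplitude k) * clin (rowc R1) y ^ k"
    using beam_eq_clin_power[OF assms(4)] by blast
  obtain c2 R2 where R2: "rotation_matrix R2" "R2 *v x2 = north_pole"
    and q2: "\<And>y. y \<in> sphere 0 1 \<Longrightarrow> q2 y = cis c2 * of_real (beam_amplitude k) * clin (rowc R2) y ^ k"
    using beam_eq_clin_power[OF assms(5)] by blast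
  have norms: "norm x1 = 1" "norm x2 = 1" using assms(2,3) by auto
  have amp: "beam_amplitude k \<noteq> 0" using beam_amplitude_squared[of k] by auto
  obtain y0 where y0: "norm y0 = 1" "x1 \<bullet> y0 = 0" "x2 \<bullet> y0 = 0"
    using exists_unit_orthogonal_to_two by blast
  define Z where "Z = rowc_phase R1 R2 y0"
  obtain \<alpha> where \<alpha>: "-pi / real k \<le> \<alpha>" "\<alpha> < pi / real k" "cis (real k * \<alpha>) = cis (c1 - c2) * Z ^ k"
    using exists_cis_root[of "cis (c1 - c2) * Z ^ k" k] rowc_phase_at_common_perpendicular(2)[OF R1 R2 y0]
      assms(1) by (auto simp: Z_def norm_mult norm_power)
  show ?thesis
  proof (intro exI conjI impI ballI)
    show "-pi / real k \<le> \<alpha>" "\<alpha> < pi / real k" by (fact \<alpha>(1), fact \<alpha>(2))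
    show "sphere_inner q1 q2 = cis (real k * \<alpha>) * of_real (cos (\<beta> / 2) ^ (2 * k))"
      using sphere_inner_beams[OF R1 R2 norms y0 q1 q2] assms(6) \<alpha>(3) by (simp add: Z_def)
  next
    fix y assume "x1 \<noteq> x2 \<and> x1 \<noteq> - x2" and y: "y \<in> sphere 0 1" and "y \<bullet> x1 = 0 \<and> y \<bullet> x2 = 0"
    then have "rowc_phase R1 R2 y = Z" and y': "norm y = 1" "x1 \<bullet> y = 0" "x2 \<bullet> y = 0"
      using rowc_phase_eq_at_common_perpendiculars[OF R1 R2 norms _ _ _ _ y0] by (auto simp: Z_def inner_commute)
    moreover have "clin (rowc R2) y \<noteq> 0"
      using rowc_phase_at_common_perpendicular(2)[OF R1 R2 y'] by (auto simp: rowc_phase_def)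
    ultimately show "q2 y \<noteq> 0" "cis (real k * \<alpha>) = q1 y / q2 y"
      using beam_quotient[OF q1[OF y] q2[OF y] rowc_phase_at_common_perpendicular(3)[OF R1 R2 y'] _ amp]
        \<alpha>(3) by auto
  next
    fix y assume "x1 = x2" and y: "y \<in> sphere 0 1" and "q2 y \<noteq> 0"
    then have "clin (rowc R2) y \<noteq> 0" using q2[OF y] assms(1) by auto
    moreover have "clin (rowc R1) y = Z * clin (rowc R2) y"
      using rowc_same_pole[OF R1 R2[folded \<open>x1 = x2\<close>] y0(1,2)] by (simp add: Z_def clin_scalar_mult)
    ultimately show "cis (real k * \<alpha>) = q1 y / q2 y"
      using beam_quotient(2)[OF q1[OF y] q2[OF y] _ _ amp] \<alpha>(3) by simp
  qed
qed
end
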